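(* For any density operators $\varrho,\sigma$ on a finite-dimensional Hilbert space and any $\alpha,\beta\in(0,1)$, \[ D_\alpha(\varrho\|\sigma)\ge\frac{\alpha(1-\beta)}{\alpha-2\alpha\beta+\beta}D_\beta(\varrho\|\sigma). \]
   Context: $D_\alpha(\varrho\|\sigma)=\frac{1}{\alpha-1}\log\operatorname{Tr}\varrho^\alpha\sigma^{1-\alpha}$ is the Petz-type Rényi divergence for $\alpha\in(0,1)$ (real powers taken on the support; $+\infty$ if the trace is $0$). *)

theory Defs
  imports Complex_Main "HOL-Library.Extended_Real" "Jordan_Normal_Form.Matrix"
begin

text \<open>Complex n x n matrices as operators on the Hilbert space C^n.\<close>

definition adj :: "complex mat \<Rightarrow> complex mat" where
  "adj A = mat (dim_col A) (dim_row A) (\<lambda>(i,j). cnj (A $$ (j,i)))"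

definition hermitian_mat :: "nat \<Rightarrow> complex mat \<Rightarrow> bool" where
  "hermitian_mat n A \<longleftrightarrow> A \<in> carrier_mat n n \<and> adj A = A"

definition psd_mat :: "nat \<Rightarrow> complex mat \<Rightarrow> bool" where
  "psd_mat n A \<longleftrightarrow> hermitian_mat n A \<and>
     (\<forall>v \<in> carrier_vec n. (\<Sum>i<n. cnj (v $ i) * (A *\<^sub>v v) $ i) \<in> \<real> \<and>
                           0 \<le> Re (\<Sum>i<n. cnj (v $ i) * (A *\<^sub>v v) $ i))"

definition mtrace :: "complex mat \<Rightarrow> complex" where
  "mtrace A = (\<Sum>i<dim_row A. A $$ (i,i))"

definition density_mat :: "nat \<Rightarrow> complex mat \<Rightarrow> bool" where
  "density_mat n A \<longleftrightarrow> psd_mat n A \<and> mtrace A = 1"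

definition unitary_mat :: "nat \<Rightarrow> complex mat \<Rightarrow> bool" where
  "unitary_mat n U \<longleftrightarrow> U \<in> carrier_mat n n \<and> adj U * U = 1\<^sub>m n"

definition real_diag :: "nat \<Rightarrow> (nat \<Rightarrow> real) \<Rightarrow> complex mat" where
  "real_diag n d = mat n n (\<lambda>(i,j). if i = j then complex_of_real (d i) else 0)"

text \<open>Real power of a positive semidefinite matrix, taken on its support:
  with a spectral decomposition A = U diag(d) U*, the power is U diag(d') U*
  where d'_i = d_i powr p if d_i > 0 and 0 otherwise.\<close>
definition mat_powr :: "nat \<Rightarrow> complex mat \<Rightarrow> real \<Rightarrow> complex mat" where
  "mat_powr n A p = (SOME B. \<exists>U d. unitary_mat n U \<and> A = U * real_diag n d * adj U \<and>
      B = U * real_diag n (\<lambda>i. if d i > 0 then d i powr p else 0) * adj U)"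

definition petz_renyi :: "nat \<Rightarrow> real \<Rightarrow> complex mat \<Rightarrow> complex mat \<Rightarrow> ereal" where
  "petz_renyi n \<alpha> \<rho> \<sigma> =
     (let t = Re (mtrace (mat_powr n \<rho> \<alpha> * mat_powr n \<sigma> (1 - \<alpha>)))
      in if t = 0 then \<infinity> else ereal (ln t / (\<alpha> - 1)))"

end

theory Submission
  imports Defs "Jordan_Normal_Form.Spectral_Radius" "HOL-Analysis.Convex"
begin

text \<open>Diagonalise \<open>\<rho> = U diag(p) U*\<close> and \<open>\<sigma> = V diag(q) V*\<close>. Then
  \<open>F s = Tr (\<rho>^s \<sigma>^(1-s)) = \<Sum>i j. w i j * p i ^ s * q j ^ (1-s)\<close>, with powers taken on
  the support and the doubly stochastic weights \<open>w i j = |(U* V) i j|^2\<close>. By Hoelder's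
  inequality \<open>F\<close> is log-convex, and \<open>F 0 \<le> 1\<close>, \<open>F 1 \<le> 1\<close>. If \<open>\<alpha> \<le> \<beta>\<close>,
  log-convexity on \<open>[0, \<beta>]\<close> gives \<open>F \<alpha> \<le> F \<beta> ^ (\<alpha>/\<beta>)\<close>; if \<open>\<beta> \<le> \<alpha>\<close>,
  log-convexity on \<open>[\<beta>, 1]\<close> gives \<open>F \<alpha> \<le> F \<beta> ^ ((1-\<alpha>)/(1-\<beta>))\<close>. Taking
  logarithms, \<open>D\<^sub>\<alpha> \<ge> \<theta> (1-\<beta>)/(1-\<alpha>) D\<^sub>\<beta>\<close> with \<open>\<theta>\<close> the exponent, and as
  \<open>D\<^sub>\<beta> \<ge> 0\<close> it remains to check that \<open>\<theta> (1-\<beta>)/(1-\<alpha>)\<close> dominates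
  \<open>\<alpha>(1-\<beta>)/(\<alpha>-2\<alpha>\<beta>+\<beta>)\<close>.\<close>

section \<open>Adjoints and unitary matrices\<close>

lemma adj_dims [simp]: "dim_row (adj A) = dim_col A" "dim_col (adj A) = dim_row A"
  unfolding adj_def by auto

lemma adj_carrier [simp]: "A \<in> carrier_mat n m \<Longrightarrow> adj A \<in> carrier_mat m n"
  unfolding adj_def by auto

lemma adj_index [simp]: "i < dim_col A \<Longrightarrow> j < dim_row A \<Longrightarrow> adj A $$ (i,j) = cnj (A $$ (j,i))"
  unfolding adj_def by auto

lemma adj_adj [simp]: "adj (adj A) = A"
  by (rule eq_matI) auto

lemma adj_mult:
  assumes "A \<in> carrier_mat n m" "B \<in> carrier_mat m k"
  shows "adj (A * B) = adj B * adj A"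
  by (rule eq_matI) (use assms in \<open>auto simp: scalar_prod_def mult.commute\<close>)

lemma adj_mult_index:
  assumes "A \<in> carrier_mat n m" "B \<in> carrier_mat n k" "i < m" "j < k"
  shows "(adj A * B) $$ (i,j) = (\<Sum>l<n. cnj (A $$ (l,i)) * B $$ (l,j))"
  using assms by (simp add: scalar_prod_def lessThan_atLeast0)

lemma adj_mult_vec_index:
  assumes "A \<in> carrier_mat n m" "x \<in> carrier_vec n" "i < m"
  shows "(adj A *\<^sub>v x) $ i = (\<Sum>l<n. cnj (A $$ (l,i)) * x $ l)"
  using assms by (simp add: scalar_prod_def lessThan_atLeast0)

text \<open>Square instances of \<open>assoc_mult_mat\<close> and \<open>mult_carrier_mat\<close>: instantiated with
  \<open>[where n = n]\<close> they work as conditional simplification rules.\<close>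
lemma assoc_mult_square_mat:
  "X \<in> carrier_mat n n \<Longrightarrow> Y \<in> carrier_mat n n \<Longrightarrow> Z \<in> carrier_mat n n \<Longrightarrow> X * Y * Z = X * (Y * Z)"
  by (rule assoc_mult_mat)

lemma mult_square_mat_carrier:
  "X \<in> carrier_mat n n \<Longrightarrow> Y \<in> carrier_mat n n \<Longrightarrow> X * Y \<in> carrier_mat n n"
  by (rule mult_carrier_mat)

lemma unitary_mat_carrier: "unitary_mat n U \<Longrightarrow> U \<in> carrier_mat n n"
  unfolding unitary_mat_def by simp

lemma unitary_mat_mult_adj: "unitary_mat n U \<Longrightarrow> U * adj U = 1\<^sub>m n"
  using mat_mult_left_right_inverse[of "adj U" n U] unfolding unitary_mat_def by auto

lemma unitary_mat_adj: "unitary_mat n U \<Longrightarrow> unitary_mat n (adj U)"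
  using unitary_mat_mult_adj unfolding unitary_mat_def by auto

lemma unitary_mat_one: "unitary_mat n (1\<^sub>m n)"
proof -
  have "adj (1\<^sub>m n) = 1\<^sub>m n"
    by (rule eq_matI) auto
  then show ?thesis
    unfolding unitary_mat_def by simp
qed

lemma unitary_mat_cancel:
  assumes U: "unitary_mat n U" and X: "X \<in> carrier_mat n m"
  shows "adj U * (U * X) = X" "U * (adj U * X) = X"
proof -
  have Uc: "U \<in> carrier_mat n n" "adj U \<in> carrier_mat n n"
    using unitary_mat_carrier[OF U] by auto
  show "adj U * (U * X) = X"
    using U X assoc_mult_mat[OF Uc(2) Uc(1) X] unfolding unitary_mat_def by simp
  show "U * (adj U * X) = X"
    using unitary_mat_mult_adj[OF U] X assoc_mult_mat[OF Uc(1) Uc(2) X] by simp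
qed

lemma unitary_mat_adj_mult:
  assumes U: "unitary_mat n U" and V: "unitary_mat n V"
  shows "unitary_mat n (adj U * V)"
proof -
  have Uc: "U \<in> carrier_mat n n" and Vc: "V \<in> carrier_mat n n"
    using U V by (auto simp: unitary_mat_carrier)
  have "adj (adj U * V) * (adj U * V) = adj V * U * (adj U * V)"
    using adj_mult[of "adj U" n n V n] Uc Vc by simp
  also have "\<dots> = adj V * (U * (adj U * V))"
    using Uc Vc by (intro assoc_mult_mat[of _ n n _ n _ n]) auto
  also have "\<dots> = 1\<^sub>m n"
    using unitary_mat_cancel(2)[OF U Vc] V unfolding unitary_mat_def by simp
  moreover have "adj U * V \<in> carrier_mat n n"
    using Uc Vc by (meson adj_carrier mult_carrier_mat)
  ultimately show ?thesis
    unfolding unitary_mat_def by simp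
qed

section \<open>Spectral theorem for Hermitian matrices\<close>

definition orthonormal_cols :: "nat \<Rightarrow> nat \<Rightarrow> complex mat \<Rightarrow> bool" where
  "orthonormal_cols n k M \<longleftrightarrow>
     (\<forall>j<k. \<forall>j'<k. (\<Sum>i<n. cnj (M $$ (i,j)) * M $$ (i,j')) = (if j = j' then 1 else 0))"

lemma unitary_iff_orthonormal_cols:
  assumes M: "M \<in> carrier_mat n n"
  shows "unitary_mat n M \<longleftrightarrow> orthonormal_cols n n M"
proof -
  have entries: "(adj M * M) $$ (j,j') = (\<Sum>i<n. cnj (M $$ (i,j)) * M $$ (i,j'))"
    if "j < n" "j' < n" for j j'
    using adj_mult_index[OF M M that] .
  have "adj M * M = 1\<^sub>m n \<longleftrightarrow> (\<forall>j<n. \<forall>j'<n. (adj M * M) $$ (j,j') = 1\<^sub>m n $$ (j,j'))"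
    using M by (auto intro!: eq_matI simp del: index_mult_mat(1))
  also have "\<dots> \<longleftrightarrow> orthonormal_cols n n M"
    unfolding orthonormal_cols_def by (simp add: entries del: index_mult_mat(1))
  finally show ?thesis
    unfolding unitary_mat_def using M by simp
qed

lemma unitary_mat_orthonormal_cols:
  "unitary_mat n M \<Longrightarrow> k \<le> n \<Longrightarrow> orthonormal_cols n k M"
  using unitary_iff_orthonormal_cols[OF unitary_mat_carrier] unfolding orthonormal_cols_def
  by (meson order_less_le_trans)

lemma exists_vec_orthogonal_to_cols:
  assumes k: "k < n"
  obtains x :: "complex vec" where "x \<in> carrier_vec n" "x \<noteq> 0\<^sub>v n"
    "\<And>j. j < k \<Longrightarrow> (\<Sum>i<n. cnj (M $$ (i,j)) * x $ i) = 0"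
proof -
  define R where "R = mat n n (\<lambda>(j,i). if j < k then cnj (M $$ (i,j)) else 0)"
  have R: "R \<in> carrier_mat n n" unfolding R_def by simp
  have "R = mat\<^sub>r n n (\<lambda>i. if i = n-1 then 0\<^sub>v n else row R i)"
    by (rule eq_matI) (use k in \<open>auto simp: R_def\<close>)
  moreover have "det (mat\<^sub>r n n (\<lambda>i. if i = n-1 then 0\<^sub>v n else row R i)) = 0"
    by (rule det_row_0) (use k R in auto)
  ultimately obtain x where x: "x \<in> carrier_vec n" "x \<noteq> 0\<^sub>v n" "R *\<^sub>v x = 0\<^sub>v n"
    using det_0_iff_vec_prod_zero[OF R] by auto
  have entry: "(\<Sum>i<n. cnj (M $$ (i,j)) * x $ i) = (R *\<^sub>v x) $ j" if "j < k" for j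
    using that k x(1) unfolding R_def by (simp add: scalar_prod_def lessThan_atLeast0)
  show thesis
  proof (rule that[OF x(1,2)])
    fix j assume "j < k"
    then show "(\<Sum>i<n. cnj (M $$ (i,j)) * x $ i) = 0"
      using entry x(3) k by simp
  qed
qed

lemma exists_unit_rescaling:
  fixes x :: "complex vec"
  assumes x: "x \<in> carrier_vec n" "x \<noteq> 0\<^sub>v n"
  obtains c :: complex where "(\<Sum>i<n. cnj (c * x $ i) * (c * x $ i)) = 1"
proof -
  define S where "S = (\<Sum>i<n. (cmod (x $ i))\<^sup>2)"
  obtain i0 where i0: "i0 < n" "x $ i0 \<noteq> 0"
    using x by (metis eq_vecI carrier_vecD index_zero_vec)
  have "(cmod (x $ i0))\<^sup>2 \<le> S"
    unfolding S_def by (rule member_le_sum) (use i0 in auto)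
  then have S: "S > 0"
    using i0 by (smt (verit) zero_less_power2 norm_eq_zero)
  define c where "c = complex_of_real (1 / sqrt S)"
  have entry: "cnj (c * z) * (c * z) = complex_of_real ((cmod z)\<^sup>2 / S)" for z
  proof -
    have "cnj (c * z) * (c * z) = complex_of_real (1 / S) * (z * cnj z)"
      using S by (simp add: c_def mult_ac flip: of_real_mult)
    then show ?thesis
      by (simp flip: complex_norm_square)
  qed
  have "(\<Sum>i<n. cnj (c * x $ i) * (c * x $ i)) = complex_of_real (\<Sum>i<n. (cmod (x $ i))\<^sup>2 / S)"
    by (simp only: entry of_real_sum)
  also have "\<dots> = 1"
    using S by (simp add: S_def flip: sum_divide_distrib)
  finally show thesis
    by (rule that)
qed

lemma orthonormal_cols_add_vec:
  assumes M: "orthonormal_cols n k M" and k: "k < n" and x: "x \<in> carrier_vec n" "x \<noteq> 0\<^sub>v n"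
    and orth: "\<And>j. j < k \<Longrightarrow> (\<Sum>i<n. cnj (M $$ (i,j)) * x $ i) = 0"
  obtains c :: complex where
    "orthonormal_cols n (Suc k) (mat n n (\<lambda>(i,j). if j = k then c * x $ i else M $$ (i,j)))"
proof -
  obtain c where unit: "(\<Sum>i<n. cnj (c * x $ i) * (c * x $ i)) = 1"
    using exists_unit_rescaling[OF x] by blast
  have orth': "(\<Sum>i<n. cnj (M $$ (i,j)) * (c * x $ i)) = 0" if "j < k" for j
  proof -
    have "(\<Sum>i<n. cnj (M $$ (i,j)) * (c * x $ i)) = c * (\<Sum>i<n. cnj (M $$ (i,j)) * x $ i)"
      unfolding sum_distrib_left by (simp add: mult.left_commute)
    then show ?thesis
      using orth[OF that] by simp
  qed
  have orth'': "(\<Sum>i<n. cnj (c * x $ i) * M $$ (i,j)) = 0" if "j < k" for j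
    using arg_cong[OF orth'[OF that], of cnj] by (simp add: mult.commute)
  define M' where "M' = mat n n (\<lambda>(i,j). if j = k then c * x $ i else M $$ (i,j))"
  have entry: "M' $$ (i,l) = (if l = k then c * x $ i else M $$ (i,l))" if "i < n" "l \<le> k" for i l
    using that k unfolding M'_def by simp
  have "orthonormal_cols n (Suc k) M'"
    unfolding orthonormal_cols_def
  proof (intro allI impI)
    fix j j' assume "j < Suc k" "j' < Suc k"
    then have "j \<le> k" "j' \<le> k" by auto
    then have "(\<Sum>i<n. cnj (M' $$ (i,j)) * M' $$ (i,j')) =
      (\<Sum>i<n. cnj (if j = k then c * x $ i else M $$ (i,j)) * (if j' = k then c * x $ i else M $$ (i,j')))"
      by (intro sum.cong) (auto simp: entry)
    also have "\<dots> = (if j = j' then 1 else 0)"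
      using M \<open>j \<le> k\<close> \<open>j' \<le> k\<close> unit orth' orth'' unfolding orthonormal_cols_def
      by (cases "j = k"; cases "j' = k") auto
    finally show "(\<Sum>i<n. cnj (M' $$ (i,j)) * M' $$ (i,j')) = (if j = j' then 1 else 0)" .
  qed
  then show thesis
    using that unfolding M'_def by blast
qed

lemma orthonormal_cols_unitary_completion:
  assumes "orthonormal_cols n k M" "k \<le> n"
  shows "\<exists>W. unitary_mat n W \<and> (\<forall>i<n. \<forall>j<k. W $$ (i,j) = M $$ (i,j))"
  using assms
proof (induction "n - k" arbitrary: k M)
  case 0
  then have "k = n" by simp
  define W where "W = mat n n (\<lambda>ij. M $$ ij)"
  have "orthonormal_cols n n W"
    using 0 \<open>k = n\<close> unfolding orthonormal_cols_def W_def by simp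
  then have "unitary_mat n W"
    by (simp add: unitary_iff_orthonormal_cols W_def)
  then show ?case
    using \<open>k = n\<close> unfolding W_def by auto
next
  case (Suc m)
  then have k: "k < n" by simp
  obtain x where x: "x \<in> carrier_vec n" "x \<noteq> 0\<^sub>v n"
    and orth: "\<And>j. j < k \<Longrightarrow> (\<Sum>i<n. cnj (M $$ (i,j)) * x $ i) = 0"
    by (rule exists_vec_orthogonal_to_cols[OF k]) blast
  obtain c where c: "orthonormal_cols n (Suc k) (mat n n (\<lambda>(i,j). if j = k then c * x $ i else M $$ (i,j)))"
    by (rule orthonormal_cols_add_vec[OF Suc.prems(1) k x orth]) blast
  have "m = n - Suc k"
    using Suc.hyps(2) by simp
  then obtain W where W: "unitary_mat n W"
    "\<forall>i<n. \<forall>j<Suc k. W $$ (i,j) = mat n n (\<lambda>(i,j). if j = k then c * x $ i else M $$ (i,j)) $$ (i,j)"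
    using Suc.hyps(1)[OF _ c] k by auto
  then show ?case
    using k by auto
qed

lemma sum_lessThan_shift_vanishing:
  fixes f :: "nat \<Rightarrow> 'a::comm_monoid_add"
  assumes "k \<le> n" "\<And>m. m < k \<Longrightarrow> f m = 0"
  shows "(\<Sum>m<n. f m) = (\<Sum>j<n-k. f (k+j))"
proof -
  have "(\<Sum>m<n. f m) = (\<Sum>m\<in>{k..<n}. f m)"
    by (rule sum.mono_neutral_right) (use assms in auto)
  also have "\<dots> = (\<Sum>j<n-k. f (k+j))"
    by (simp only: sum.atLeastLessThan_shift_0[of _ k n]) (simp add: lessThan_atLeast0)
  finally show ?thesis .
qed

lemma lower_block_triangular_pad_eigenvector:
  fixes C :: "'a :: comm_semiring_1 mat"
  assumes C: "C \<in> carrier_mat n n" and k: "k \<le> n"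
    and block: "\<And>l m. l < k \<Longrightarrow> k \<le> m \<Longrightarrow> m < n \<Longrightarrow> C $$ (l,m) = 0"
    and y: "y \<in> carrier_vec (n-k)"
    and eig: "mat (n-k) (n-k) (\<lambda>(i,j). C $$ (k+i, k+j)) *\<^sub>v y = \<mu> \<cdot>\<^sub>v y"
  defines "z \<equiv> vec n (\<lambda>i. if i < k then 0 else y $ (i-k))"
  shows "C *\<^sub>v z = \<mu> \<cdot>\<^sub>v z"
proof (rule eq_vecI)
  fix l assume "l < dim_vec (\<mu> \<cdot>\<^sub>v z)"
  then have l: "l < n"
    unfolding z_def by simp
  have "(C *\<^sub>v z) $ l = (\<Sum>m<n. C $$ (l,m) * z $ m)"
    using l C by (simp add: z_def scalar_prod_def lessThan_atLeast0)
  also have "\<dots> = (\<Sum>j<n-k. C $$ (l,k+j) * z $ (k+j))"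
    using k by (intro sum_lessThan_shift_vanishing) (auto simp: z_def)
  also have "\<dots> = (\<Sum>j<n-k. C $$ (l,k+j) * y $ j)"
    by (intro sum.cong) (auto simp: z_def)
  also have "\<dots> = \<mu> * z $ l"
  proof (cases "l < k")
    case True
    then show ?thesis
      using block by (simp add: z_def l)
  next
    case False
    then have "(mat (n-k) (n-k) (\<lambda>(i,j). C $$ (k+i, k+j)) *\<^sub>v y) $ (l-k) = (\<Sum>j<n-k. C $$ (l,k+j) * y $ j)"
      using l y by (simp add: scalar_prod_def lessThan_atLeast0)
    then show ?thesis
      using eig False l y by (simp add: z_def)
  qed
  finally show "(C *\<^sub>v z) $ l = (\<mu> \<cdot>\<^sub>v z) $ l"
    using l by (simp add: z_def)
qed (use C in \<open>simp add: z_def\<close>)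

lemma lower_block_triangular_tail_eigenvector:
  fixes C :: "complex mat"
  assumes C: "C \<in> carrier_mat n n" and k: "k < n"
    and block: "\<And>l m. l < k \<Longrightarrow> k \<le> m \<Longrightarrow> m < n \<Longrightarrow> C $$ (l,m) = 0"
  obtains \<mu> z where "z \<in> carrier_vec n" "z \<noteq> 0\<^sub>v n" "\<And>i. i < k \<Longrightarrow> z $ i = 0" "C *\<^sub>v z = \<mu> \<cdot>\<^sub>v z"
proof -
  define D where "D = mat (n-k) (n-k) (\<lambda>(i,j). C $$ (k+i, k+j))"
  have D: "D \<in> carrier_mat (n-k) (n-k)"
    unfolding D_def by simp
  obtain \<mu> where "eigenvalue D \<mu>"
    using spectrum_non_empty[OF D] k unfolding spectrum_def by auto
  then obtain y where y: "y \<in> carrier_vec (n-k)" "y \<noteq> 0\<^sub>v (n-k)" "D *\<^sub>v y = \<mu> \<cdot>\<^sub>v y"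
    unfolding eigenvalue_def eigenvector_def using D by auto
  define z where "z = vec n (\<lambda>i. if i < k then 0 else y $ (i-k))"
  have z: "z \<in> carrier_vec n"
    unfolding z_def by simp
  obtain j where j: "j < n - k" "y $ j \<noteq> 0"
    using y(1,2) by (metis eq_vecI carrier_vecD index_zero_vec)
  then have "z $ (j+k) \<noteq> 0"
    unfolding z_def by simp
  then have nonzero: "z \<noteq> 0\<^sub>v n"
    using j by auto
  have head: "z $ i = 0" if "i < k" for i
    using that k by (simp add: z_def)
  have "C *\<^sub>v z = \<mu> \<cdot>\<^sub>v z"
    using lower_block_triangular_pad_eigenvector[OF C less_imp_le[OF k] block y(1)] y(3)
    unfolding D_def z_def by simp
  with z nonzero head show thesis
    by (rule that)
qed

lemma hermitian_conj_eigencol_row_zero: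
  assumes A: "hermitian_mat n A" and W: "unitary_mat n W"
    and eig: "A *\<^sub>v col W l = \<mu> \<cdot>\<^sub>v col W l" and l: "l < n" and m: "m < n" "m \<noteq> l"
  shows "(adj W * (A * W)) $$ (l,m) = 0"
proof -
  have Ac: "A \<in> carrier_mat n n" and adjA: "adj A = A"
    using A unfolding hermitian_mat_def by auto
  have Wc: "W \<in> carrier_mat n n"
    using W by (rule unitary_mat_carrier)
  have AWc: "A * W \<in> carrier_mat n n"
    using Ac Wc by simp
  have "adj W * (A * W) = adj (A * W) * W"
    using adj_mult[OF Ac Wc] adjA assoc_mult_mat[of "adj W" n n A n W n] Ac Wc by simp
  then have "(adj W * (A * W)) $$ (l,m) = (\<Sum>i<n. cnj ((A * W) $$ (i,l)) * W $$ (i,m))"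
    using adj_mult_index[OF AWc Wc] l m by simp
  also have "\<dots> = (\<Sum>i<n. cnj \<mu> * (cnj (W $$ (i,l)) * W $$ (i,m)))"
  proof (intro sum.cong refl)
    fix i assume "i \<in> {..<n}"
    then have "(A * W) $$ (i,l) = (A *\<^sub>v col W l) $ i"
      using l Ac Wc by simp
    also have "\<dots> = \<mu> * W $$ (i,l)"
      using eig \<open>i \<in> {..<n}\<close> l Wc by simp
    finally show "cnj ((A * W) $$ (i,l)) * W $$ (i,m) = cnj \<mu> * (cnj (W $$ (i,l)) * W $$ (i,m))"
      by simp
  qed
  also have "\<dots> = 0"
    using unitary_mat_orthonormal_cols[OF W order.refl] l m
    unfolding orthonormal_cols_def by (simp flip: sum_distrib_left)
  finally show ?thesis .
qed

text \<open>The first \<open>k\<close> rows of \<open>W* A W\<close> vanish off the diagonal, so its trailing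
  \<open>(n-k) \<times> (n-k)\<close> block has an eigenvector; mapped back by \<open>W\<close> it is orthogonal to the
  first \<open>k\<close> columns of \<open>W\<close>.\<close>
lemma hermitian_eigenvector_orthogonal_to_cols:
  assumes A: "hermitian_mat n A" and W: "unitary_mat n W" and k: "k < n"
    and eig: "\<And>j. j < k \<Longrightarrow> A *\<^sub>v col W j = lam j \<cdot>\<^sub>v col W j"
  obtains \<mu> x where "x \<in> carrier_vec n" "x \<noteq> 0\<^sub>v n" "A *\<^sub>v x = \<mu> \<cdot>\<^sub>v x"
    "\<And>j. j < k \<Longrightarrow> (\<Sum>i<n. cnj (W $$ (i,j)) * x $ i) = 0"
proof -
  have Ac: "A \<in> carrier_mat n n"
    using A unfolding hermitian_mat_def by simp
  have Wc: "W \<in> carrier_mat n n"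
    using W by (rule unitary_mat_carrier)
  have AWc: "A * W \<in> carrier_mat n n"
    using Ac Wc by simp
  define C where "C = adj W * (A * W)"
  have C: "C \<in> carrier_mat n n"
    unfolding C_def using Wc AWc by (meson adj_carrier mult_carrier_mat)
  have "C $$ (l,m) = 0" if "l < k" "k \<le> m" "m < n" for l m
    unfolding C_def using hermitian_conj_eigencol_row_zero[OF A W eig[OF that(1)]] that k by simp
  then obtain \<mu> z where z: "z \<in> carrier_vec n" "z \<noteq> 0\<^sub>v n" "\<And>i. i < k \<Longrightarrow> z $ i = 0"
    "C *\<^sub>v z = \<mu> \<cdot>\<^sub>v z"
    by (rule lower_block_triangular_tail_eigenvector[OF C k]) blast+
  define x where "x = W *\<^sub>v z"
  have x: "x \<in> carrier_vec n"
    unfolding x_def using Wc z(1) by simp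
  have zx: "adj W *\<^sub>v x = z"
    unfolding x_def using W z(1) Wc
    by (simp add: assoc_mult_mat_vec[of "adj W" n n W n z, symmetric] unitary_mat_def)
  have "A *\<^sub>v x = (W * C) *\<^sub>v z"
    unfolding x_def C_def using unitary_mat_cancel(2)[OF W AWc] Ac Wc z(1) by simp
  also have "\<dots> = \<mu> \<cdot>\<^sub>v x"
    unfolding x_def using Wc C z by (simp add: mult_mat_vec)
  finally have "A *\<^sub>v x = \<mu> \<cdot>\<^sub>v x" .
  moreover have "x \<noteq> 0\<^sub>v n"
  proof
    assume "x = 0\<^sub>v n"
    moreover have "adj W *\<^sub>v 0\<^sub>v n = 0\<^sub>v n"
      using Wc by (intro eq_vecI) (auto simp: scalar_prod_def)
    ultimately have "z = 0\<^sub>v n"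
      using zx by simp
    then show False
      using z(2) by simp
  qed
  moreover have "(\<Sum>i<n. cnj (W $$ (i,j)) * x $ i) = 0" if "j < k" for j
    using adj_mult_vec_index[OF Wc x, of j] zx z(3)[OF that] that k by simp
  ultimately show thesis
    using that x by blast
qed

lemma hermitian_eigenbasis_step:
  assumes A: "hermitian_mat n A" and W: "unitary_mat n W" and k: "k < n"
    and eig: "\<And>j. j < k \<Longrightarrow> A *\<^sub>v col W j = lam j \<cdot>\<^sub>v col W j"
  obtains W' lam' where "unitary_mat n W'" "\<And>j. j < Suc k \<Longrightarrow> A *\<^sub>v col W' j = lam' j \<cdot>\<^sub>v col W' j"
proof -
  have Ac: "A \<in> carrier_mat n n"
    using A unfolding hermitian_mat_def by simp
  obtain \<mu> x where x: "x \<in> carrier_vec n" "x \<noteq> 0\<^sub>v n" "A *\<^sub>v x = \<mu> \<cdot>\<^sub>v x"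
    and orth: "\<And>j. j < k \<Longrightarrow> (\<Sum>i<n. cnj (W $$ (i,j)) * x $ i) = 0"
    using hermitian_eigenvector_orthogonal_to_cols[OF A W k eig] by blast
  obtain c where "orthonormal_cols n (Suc k) (mat n n (\<lambda>(i,j). if j = k then c * x $ i else W $$ (i,j)))"
    using orthonormal_cols_add_vec[OF unitary_mat_orthonormal_cols[OF W] k x(1,2) orth] k by auto
  then have "\<exists>W'. unitary_mat n W' \<and>
      (\<forall>i<n. \<forall>j<Suc k. W' $$ (i,j) = mat n n (\<lambda>(i,j). if j = k then c * x $ i else W $$ (i,j)) $$ (i,j))"
    using k by (intro orthonormal_cols_unitary_completion) auto
  then obtain W' where W': "unitary_mat n W'"
    and cols: "\<forall>i<n. \<forall>j<Suc k. W' $$ (i,j) = mat n n (\<lambda>(i,j). if j = k then c * x $ i else W $$ (i,j)) $$ (i,j)"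
    by blast
  have W'c: "W' \<in> carrier_mat n n" and Wc: "W \<in> carrier_mat n n"
    using W W' by (auto simp: unitary_mat_carrier)
  have "A *\<^sub>v col W' j = (lam(k := \<mu>)) j \<cdot>\<^sub>v col W' j" if j: "j < Suc k" for j
  proof (cases "j = k")
    case True
    then have "col W' j = c \<cdot>\<^sub>v x"
      using cols k W'c x(1) by (intro eq_vecI) auto
    then show ?thesis
      using True x Ac by (simp add: mult_mat_vec smult_smult_assoc mult.commute)
  next
    case False
    then have "col W' j = col W j"
      using cols j k W'c Wc by (intro eq_vecI) auto
    then show ?thesis
      using eig False j by simp
  qed
  with W' show thesis
    by (rule that)
qed

lemma hermitian_eigenbasis:
  assumes A: "hermitian_mat n A"
  obtains W lam where "unitary_mat n W" "\<And>j. j < n \<Longrightarrow> A *\<^sub>v col W j = lam j \<cdot>\<^sub>v col W j"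
proof -
  have "\<exists>W lam. unitary_mat n W \<and> (\<forall>j<k. A *\<^sub>v col W j = lam j \<cdot>\<^sub>v col W j)" if "k \<le> n" for k
    using that
  proof (induction k)
    case 0
    show ?case
      using unitary_mat_one by blast
  next
    case (Suc k)
    then have k: "k < n" by simp
    from Suc obtain W lam where W: "unitary_mat n W" and eig: "\<And>j. j < k \<Longrightarrow> A *\<^sub>v col W j = lam j \<cdot>\<^sub>v col W j"
      by auto
    obtain W' lam' where "unitary_mat n W'" "\<And>j. j < Suc k \<Longrightarrow> A *\<^sub>v col W' j = lam' j \<cdot>\<^sub>v col W' j"
      using hermitian_eigenbasis_step[OF A W k eig] by blast
    then show ?case
      by blast
  qed
  then show thesis
    using that by blast
qed

lemma eigencols_mult_eq_mat_diag:
  fixes A W :: "'a :: comm_semiring_1 mat"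
  assumes A: "A \<in> carrier_mat n n" and W: "W \<in> carrier_mat n n"
    and eig: "\<And>j. j < n \<Longrightarrow> A *\<^sub>v col W j = lam j \<cdot>\<^sub>v col W j"
  shows "A * W = W * mat_diag n lam"
proof (rule eq_matI)
  fix i j assume "i < dim_row (W * mat_diag n lam)" "j < dim_col (W * mat_diag n lam)"
  then have i: "i < n" and j: "j < n"
    using W by (auto simp: mat_diag_def)
  have "(A * W) $$ (i,j) = (A *\<^sub>v col W j) $ i"
    using i j A W by simp
  then show "(A * W) $$ (i,j) = (W * mat_diag n lam) $$ (i,j)"
    using eig[OF j] i j W by (simp add: mat_diag_mult_right[OF W] mult.commute)
qed (use A W in \<open>auto simp: mat_diag_def\<close>)

lemma real_diag_eq_mat_diag: "real_diag n d = mat_diag n (\<lambda>i. complex_of_real (d i))"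
  unfolding real_diag_def mat_diag_def by (rule eq_matI) auto

lemma real_diag_carrier [simp]: "real_diag n d \<in> carrier_mat n n"
  unfolding real_diag_def by simp

lemma real_diag_dims [simp]: "dim_row (real_diag n d) = n" "dim_col (real_diag n d) = n"
  unfolding real_diag_def by simp_all

lemma hermitian_spectral_decomposition:
  assumes A: "hermitian_mat n A"
  obtains U d where "unitary_mat n U" "A = U * real_diag n d * adj U"
proof -
  obtain W lam where W: "unitary_mat n W" and eig: "\<And>j. j < n \<Longrightarrow> A *\<^sub>v col W j = lam j \<cdot>\<^sub>v col W j"
    by (rule hermitian_eigenbasis[OF A]) blast
  have Ac: "A \<in> carrier_mat n n" and adjA: "adj A = A"
    using A unfolding hermitian_mat_def by auto
  have Wc: "W \<in> carrier_mat n n"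
    using W by (rule unitary_mat_carrier)
  have AW: "A * W = W * mat_diag n lam"
    by (rule eigencols_mult_eq_mat_diag[OF Ac Wc eig])
  define D where "D = adj W * (A * W)"
  have D: "D = mat_diag n lam"
    unfolding D_def AW using unitary_mat_cancel(1)[OF W mat_diag_dim] .
  have "adj D = D"
    unfolding D_def using adj_mult[OF Ac Wc] adjA adj_mult[of "adj W" n n "A * W" n] Ac Wc
    assoc_mult_mat[of "adj W" n n A n W n] by (simp add: mult_carrier_mat)
  have real: "cnj (lam j) = lam j" if "j < n" for j
  proof -
    have Djj: "D $$ (j,j) = lam j"
      using that unfolding D mat_diag_def by simp
    have "adj D $$ (j,j) = cnj (D $$ (j,j))"
      using that unfolding D by (simp add: mat_diag_def)
    then show ?thesis
      using \<open>adj D = D\<close> Djj by simp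
  qed
  have "mat_diag n lam = real_diag n (\<lambda>j. Re (lam j))"
    unfolding real_diag_eq_mat_diag mat_diag_def using real
    by (intro eq_matI) (auto simp: Reals_cnj_iff)
  moreover have "A = W * mat_diag n lam * adj W"
  proof -
    have "A = A * (W * adj W)"
      using unitary_mat_mult_adj[OF W] Ac by simp
    also have "\<dots> = A * W * adj W"
      using Ac Wc by (simp add: assoc_mult_mat[of A n n W n "adj W" n])
    finally show ?thesis
      unfolding AW .
  qed
  ultimately show thesis
    using that[OF W] by simp
qed

section \<open>Matrix powers and traces\<close>

lemma mat_diag_commute_iff:
  assumes X: "X \<in> carrier_mat n n"
  shows "X * mat_diag n g = mat_diag n h * X \<longleftrightarrow> (\<forall>i<n. \<forall>j<n. X $$ (i,j) * g j = h i * X $$ (i,j))"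
  unfolding mat_diag_mult_right[OF X] mat_diag_mult_left[OF X] by (auto simp: mat_eq_iff)

text \<open>Needed because \<open>mat_powr\<close> picks its diagonalisation by \<open>SOME\<close>.\<close>
lemma unitary_diag_fun_cong:
  assumes U: "unitary_mat n U" and V: "unitary_mat n V"
    and eq: "U * real_diag n d * adj U = V * real_diag n e * adj V"
  shows "U * real_diag n (\<lambda>i. f (d i)) * adj U = V * real_diag n (\<lambda>i. f (e i)) * adj V"
proof -
  have Uc: "U \<in> carrier_mat n n" "adj U \<in> carrier_mat n n"
    and Vc: "V \<in> carrier_mat n n" "adj V \<in> carrier_mat n n"
    using U V by (auto simp: unitary_mat_carrier)
  note cancel = unitary_mat_cancel[OF U, where m = n] unitary_mat_cancel[OF V, where m = n]
    unitary_mat_mult_adj[OF U] unitary_mat_mult_adj[OF V]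
  have inv: "adj U * U = 1\<^sub>m n" "adj V * V = 1\<^sub>m n"
    using U V unfolding unitary_mat_def by auto
  define X where "X = adj V * U"
  have X: "X \<in> carrier_mat n n"
    unfolding X_def using mult_carrier_mat[OF Vc(2) Uc(1)] .
  have "X * real_diag n d = adj V * (U * real_diag n d * adj U) * U"
    unfolding X_def using Uc Vc by (simp add: assoc_mult_square_mat[where n = n] mult_square_mat_carrier[where n = n] cancel inv)
  also have "\<dots> = real_diag n e * X"
    unfolding eq X_def using Uc Vc by (simp add: assoc_mult_square_mat[where n = n] mult_square_mat_carrier[where n = n] cancel inv)
  finally have "\<forall>i<n. \<forall>j<n. X $$ (i,j) * complex_of_real (d j) = complex_of_real (e i) * X $$ (i,j)"
    by (simp only: mat_diag_commute_iff[OF X] real_diag_eq_mat_diag)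
  then have "\<forall>i<n. \<forall>j<n. X $$ (i,j) * complex_of_real (f (d j)) = complex_of_real (f (e i)) * X $$ (i,j)"
    by (metis mult.commute mult_cancel_left of_real_eq_iff)
  then have comm: "X * real_diag n (\<lambda>i. f (d i)) = real_diag n (\<lambda>i. f (e i)) * X"
    by (simp only: mat_diag_commute_iff[OF X] real_diag_eq_mat_diag)
  have "U * real_diag n (\<lambda>i. f (d i)) * adj U = V * (X * real_diag n (\<lambda>i. f (d i))) * adj U"
    unfolding X_def using Uc Vc by (simp add: assoc_mult_square_mat[where n = n] mult_square_mat_carrier[where n = n] cancel inv)
  also have "\<dots> = V * real_diag n (\<lambda>i. f (e i)) * adj V"
    unfolding comm unfolding X_def using Uc Vc by (simp add: assoc_mult_square_mat[where n = n] mult_square_mat_carrier[where n = n] cancel inv)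
  finally show ?thesis .
qed

definition supp_powr :: "real \<Rightarrow> real \<Rightarrow> real" where
  "supp_powr x p = (if x > 0 then x powr p else 0)"

lemma mat_powr_eq:
  assumes U: "unitary_mat n U" and A: "A = U * real_diag n d * adj U"
  shows "mat_powr n A p = U * real_diag n (\<lambda>i. supp_powr (d i) p) * adj U"
proof -
  define P where "P = (\<lambda>B. \<exists>U d. unitary_mat n U \<and> A = U * real_diag n d * adj U \<and>
      B = U * real_diag n (\<lambda>i. if d i > 0 then d i powr p else 0) * adj U)"
  have "P (U * real_diag n (\<lambda>i. supp_powr (d i) p) * adj U)"
    unfolding P_def supp_powr_def using U A by blast
  then have "P (SOME B. P B)"
    by (rule someI)
  then obtain U' d' where U': "unitary_mat n U'" and A': "A = U' * real_diag n d' * adj U'"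
    and some: "(SOME B. P B) = U' * real_diag n (\<lambda>i. supp_powr (d' i) p) * adj U'"
    unfolding P_def supp_powr_def by blast
  have "U' * real_diag n (\<lambda>i. supp_powr (d' i) p) * adj U' = U * real_diag n (\<lambda>i. supp_powr (d i) p) * adj U"
    using unitary_diag_fun_cong[OF U' U, of d' d] A A' by simp
  then show ?thesis
    unfolding mat_powr_def P_def[symmetric] some .
qed

lemma mtrace_mult_comm:
  assumes A: "A \<in> carrier_mat n m" and B: "B \<in> carrier_mat m n"
  shows "mtrace (A * B) = mtrace (B * A)"
proof -
  have "mtrace (A * B) = (\<Sum>i<n. \<Sum>j<m. A $$ (i,j) * B $$ (j,i))"
    unfolding mtrace_def using A B by (simp add: scalar_prod_def lessThan_atLeast0)
  also have "\<dots> = (\<Sum>j<m. \<Sum>i<n. B $$ (j,i) * A $$ (i,j))"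
    by (subst sum.swap) (simp add: mult.commute)
  also have "\<dots> = mtrace (B * A)"
    unfolding mtrace_def using A B by (simp add: scalar_prod_def lessThan_atLeast0)
  finally show ?thesis .
qed

lemma mtrace_unitary_conj_diag:
  assumes U: "unitary_mat n U"
  shows "mtrace (U * real_diag n d * adj U) = complex_of_real (\<Sum>i<n. d i)"
proof -
  have Uc: "U \<in> carrier_mat n n"
    using U by (rule unitary_mat_carrier)
  have "mtrace (U * real_diag n d * adj U) = mtrace (adj U * (U * real_diag n d))"
    using Uc by (intro mtrace_mult_comm[of _ n n]) auto
  also have "\<dots> = mtrace (real_diag n d)"
    using unitary_mat_cancel(1)[OF U real_diag_carrier] by simp
  finally show ?thesis
    unfolding mtrace_def real_diag_def by simp
qed

lemma psd_mat_unitary_conj_diag_nonneg: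
  assumes U: "unitary_mat n U" and A: "A = U * real_diag n d * adj U"
    and psd: "psd_mat n A" and j: "j < n"
  shows "0 \<le> d j"
proof -
  have Uc: "U \<in> carrier_mat n n"
    using U by (rule unitary_mat_carrier)
  define v where "v = col U j"
  have v: "v \<in> carrier_vec n"
    unfolding v_def using j Uc by simp
  have Ac: "A \<in> carrier_mat n n"
    using psd unfolding psd_mat_def hermitian_mat_def by simp
  have "A * U = U * real_diag n d * (adj U * U)"
    unfolding A using Uc by (simp add: assoc_mult_mat[of "U * real_diag n d" n n "adj U" n U n])
  then have AU: "A * U = U * real_diag n d"
    using U mult_carrier_mat[OF Uc real_diag_carrier] unfolding unitary_mat_def by simp
  have "A *\<^sub>v v = col (A * U) j"
    unfolding v_def using j Ac Uc by simp
  also have "\<dots> = complex_of_real (d j) \<cdot>\<^sub>v v"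
    unfolding AU real_diag_eq_mat_diag mat_diag_mult_right[OF Uc] v_def
    using j Uc by (intro eq_vecI) auto
  finally have "A *\<^sub>v v = complex_of_real (d j) \<cdot>\<^sub>v v" .
  then have "(\<Sum>i<n. cnj (v $ i) * (A *\<^sub>v v) $ i) = complex_of_real (d j) * (\<Sum>i<n. cnj (U $$ (i,j)) * U $$ (i,j))"
    using v j Uc by (simp add: v_def sum_distrib_left mult_ac)
  also have "\<dots> = complex_of_real (d j)"
    using unitary_mat_orthonormal_cols[OF U order.refl] j unfolding orthonormal_cols_def by simp
  finally show ?thesis
    using psd v unfolding psd_mat_def by (metis Re_complex_of_real)
qed

lemma density_mat_spectral_decomposition:
  assumes "density_mat n A"
  obtains U p where "unitary_mat n U" "A = U * real_diag n p * adj U"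
    "\<And>i. i < n \<Longrightarrow> 0 \<le> p i" "(\<Sum>i<n. p i) = 1"
proof -
  have psd: "psd_mat n A" and tr: "mtrace A = 1"
    using assms unfolding density_mat_def by auto
  have "hermitian_mat n A"
    using psd unfolding psd_mat_def by simp
  then obtain U p where U: "unitary_mat n U" and A: "A = U * real_diag n p * adj U"
    by (rule hermitian_spectral_decomposition)
  have "complex_of_real (\<Sum>i<n. p i) = 1"
    using mtrace_unitary_conj_diag[OF U, of p] tr A by simp
  then show thesis
    using that U A psd_mat_unitary_conj_diag_nonneg[OF U A psd] by (simp only: of_real_eq_1_iff)
qed

lemma unitary_mat_col_norm_sq_sum:
  assumes X: "unitary_mat n X" and j: "j < n"
  shows "(\<Sum>i<n. (cmod (X $$ (i,j)))\<^sup>2) = 1"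
proof -
  have "complex_of_real (\<Sum>i<n. (cmod (X $$ (i,j)))\<^sup>2) = (\<Sum>i<n. cnj (X $$ (i,j)) * X $$ (i,j))"
    unfolding of_real_sum by (intro sum.cong refl) (metis complex_norm_square mult.commute)
  also have "\<dots> = 1"
    using unitary_mat_orthonormal_cols[OF X order.refl] j unfolding orthonormal_cols_def by simp
  finally show ?thesis
    by (simp only: of_real_eq_1_iff)
qed

lemma unitary_mat_row_norm_sq_sum:
  assumes X: "unitary_mat n X" and i: "i < n"
  shows "(\<Sum>j<n. (cmod (X $$ (i,j)))\<^sup>2) = 1"
proof -
  have "X \<in> carrier_mat n n"
    using X by (rule unitary_mat_carrier)
  then have "(\<Sum>j<n. (cmod (X $$ (i,j)))\<^sup>2) = (\<Sum>j<n. (cmod (adj X $$ (j,i)))\<^sup>2)"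
    using i by (intro sum.cong refl) simp
  also have "\<dots> = 1"
    using unitary_mat_col_norm_sq_sum[OF unitary_mat_adj[OF X] i] .
  finally show ?thesis .
qed

lemma mtrace_unitary_conj_diag_mult:
  assumes U: "unitary_mat n U" and V: "unitary_mat n V"
  shows "mtrace (U * real_diag n a * adj U * (V * real_diag n b * adj V)) =
    complex_of_real (\<Sum>i<n. \<Sum>j<n. (cmod ((adj U * V) $$ (i,j)))\<^sup>2 * a i * b j)"
proof -
  have Uc: "U \<in> carrier_mat n n" "adj U \<in> carrier_mat n n"
    and Vc: "V \<in> carrier_mat n n" "adj V \<in> carrier_mat n n"
    using U V by (auto simp: unitary_mat_carrier)
  define X where "X = adj U * V"
  have X: "X \<in> carrier_mat n n"
    unfolding X_def using mult_carrier_mat[OF Uc(2) Vc(1)] .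
  have adjX: "adj X = adj V * U"
    unfolding X_def using adj_mult[OF Uc(2) Vc(1)] by simp
  define R where "R = real_diag n a * (X * (real_diag n b * adj V))"
  have R: "R \<in> carrier_mat n n"
    unfolding R_def using X Vc by (simp add: mult_square_mat_carrier[where n = n])
  have "U * real_diag n a * adj U * (V * real_diag n b * adj V) = U * R"
    unfolding R_def X_def using Uc Vc by (simp add: assoc_mult_square_mat[where n = n] mult_square_mat_carrier[where n = n])
  then have "mtrace (U * real_diag n a * adj U * (V * real_diag n b * adj V)) = mtrace (R * U)"
    using mtrace_mult_comm[OF Uc(1) R] by simp
  also have "R * U = real_diag n a * (X * (real_diag n b * adj X))"
    unfolding R_def adjX using Uc Vc X by (simp add: assoc_mult_square_mat[where n = n] mult_square_mat_carrier[where n = n])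
  also have "mtrace \<dots> = (\<Sum>i<n. \<Sum>j<n. complex_of_real ((cmod (X $$ (i,j)))\<^sup>2 * a i * b j))"
  proof -
    have inner: "real_diag n b * adj X = mat n n (\<lambda>(j,i). complex_of_real (b j) * cnj (X $$ (i,j)))"
      unfolding real_diag_eq_mat_diag mat_diag_mult_left[OF adj_carrier[OF X]]
      using X by (intro eq_matI) auto
    have "(real_diag n a * (X * (real_diag n b * adj X))) $$ (i,i) =
        (\<Sum>j<n. complex_of_real (a i) * (X $$ (i,j) * (complex_of_real (b j) * cnj (X $$ (i,j)))))"
      if "i < n" for i
      unfolding real_diag_eq_mat_diag[of n a] inner mat_diag_mult_left[OF mult_carrier_mat[OF X mat_carrier]]
      using that X by (simp add: scalar_prod_def lessThan_atLeast0 sum_distrib_left)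
    moreover have "complex_of_real (a i) * (X $$ (i,j) * (complex_of_real (b j) * cnj (X $$ (i,j)))) =
        complex_of_real ((cmod (X $$ (i,j)))\<^sup>2 * a i * b j)" for i j
      by (simp add: mult_ac flip: complex_norm_square)
    ultimately show ?thesis
      unfolding mtrace_def using X by simp
  qed
  finally show ?thesis
    unfolding X_def by simp
qed

section \<open>Reduction to a classical trace function\<close>

definition prob_vector :: "nat \<Rightarrow> (nat \<Rightarrow> real) \<Rightarrow> bool" where
  "prob_vector n p \<longleftrightarrow> (\<forall>i<n. 0 \<le> p i) \<and> (\<Sum>i<n. p i) = 1"

definition doubly_stochastic :: "nat \<Rightarrow> (nat \<Rightarrow> nat \<Rightarrow> real) \<Rightarrow> bool" where
  "doubly_stochastic n w \<longleftrightarrow> (\<forall>i j. 0 \<le> w i j) \<and>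
     (\<forall>i<n. (\<Sum>j<n. w i j) = 1) \<and> (\<forall>j<n. (\<Sum>i<n. w i j) = 1)"

definition classical_trace :: "nat \<Rightarrow> (nat \<Rightarrow> real) \<Rightarrow> (nat \<Rightarrow> real) \<Rightarrow> (nat \<Rightarrow> nat \<Rightarrow> real) \<Rightarrow> real \<Rightarrow> real" where
  "classical_trace n p q w s = (\<Sum>i<n. \<Sum>j<n. w i j * supp_powr (p i) s * supp_powr (q j) (1 - s))"

definition petz_trace :: "nat \<Rightarrow> complex mat \<Rightarrow> complex mat \<Rightarrow> real \<Rightarrow> real" where
  "petz_trace n \<rho> \<sigma> s = Re (mtrace (mat_powr n \<rho> s * mat_powr n \<sigma> (1 - s)))"

lemma petz_trace_classical:
  assumes "density_mat n \<rho>" "density_mat n \<sigma>"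
  obtains p q w where "prob_vector n p" "prob_vector n q" "doubly_stochastic n w"
    "petz_trace n \<rho> \<sigma> = classical_trace n p q w"
proof -
  obtain U p where U: "unitary_mat n U" "\<rho> = U * real_diag n p * adj U"
    and p: "\<And>i. i < n \<Longrightarrow> 0 \<le> p i" "(\<Sum>i<n. p i) = 1"
    using density_mat_spectral_decomposition[OF assms(1)] by blast
  obtain V q where V: "unitary_mat n V" "\<sigma> = V * real_diag n q * adj V"
    and q: "\<And>j. j < n \<Longrightarrow> 0 \<le> q j" "(\<Sum>j<n. q j) = 1"
    using density_mat_spectral_decomposition[OF assms(2)] by blast
  define w where "w i j = (cmod ((adj U * V) $$ (i,j)))\<^sup>2" for i j
  have X: "unitary_mat n (adj U * V)"
    using unitary_mat_adj_mult[OF U(1) V(1)] .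
  have "doubly_stochastic n w"
    unfolding doubly_stochastic_def w_def
    using unitary_mat_row_norm_sq_sum[OF X] unitary_mat_col_norm_sq_sum[OF X] by simp
  moreover have "petz_trace n \<rho> \<sigma> = classical_trace n p q w"
    unfolding petz_trace_def classical_trace_def mat_powr_eq[OF U] mat_powr_eq[OF V]
      mtrace_unitary_conj_diag_mult[OF U(1) V(1)] w_def
    by simp
  ultimately show thesis
    using that p q unfolding prob_vector_def by blast
qed

section \<open>Log-convexity\<close>

lemma supp_powr_nonneg: "0 \<le> supp_powr x p"
  unfolding supp_powr_def by simp

lemma supp_powr_0_le_1: "supp_powr x 0 \<le> 1"
  unfolding supp_powr_def by simp

lemma supp_powr_1: "0 \<le> x \<Longrightarrow> supp_powr x 1 = x"
  unfolding supp_powr_def by auto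

lemma supp_powr_interpolate:
  fixes w a b t x y :: real
  assumes "0 \<le> w"
  shows "w * supp_powr a (t*x + (1-t)*y) * supp_powr b (1 - (t*x + (1-t)*y)) =
    (w * supp_powr a x * supp_powr b (1 - x)) powr t * (w * supp_powr a y * supp_powr b (1 - y)) powr (1 - t)"
proof (cases "0 < w \<and> 0 < a \<and> 0 < b")
  case True
  let ?L = "w * supp_powr a (t*x + (1-t)*y) * supp_powr b (1 - (t*x + (1-t)*y))"
  let ?R = "(w * supp_powr a x * supp_powr b (1 - x)) powr t * (w * supp_powr a y * supp_powr b (1 - y)) powr (1 - t)"
  have "0 < ?L" "0 < ?R"
    using True by (simp_all add: supp_powr_def)
  moreover have "ln ?L = ln ?R"
    using True by (simp add: supp_powr_def ln_mult ln_powr algebra_simps)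
  ultimately show ?thesis
    by simp
next
  case False
  then show ?thesis
    using assms by (auto simp: supp_powr_def)
qed

lemma Youngs_inequality_0_nonneg:
  fixes a b t :: real
  assumes "0 \<le> a" "0 \<le> b" "0 < t" "t < 1"
  shows "a powr t * b powr (1 - t) \<le> t * a + (1 - t) * b"
  using Youngs_inequality_0[of t "1 - t" a b] assms by (cases "a = 0 \<or> b = 0") auto

lemma Holder_sum_powr:
  fixes u v :: "'k \<Rightarrow> real"
  assumes K: "finite K" and u: "\<And>k. k \<in> K \<Longrightarrow> 0 \<le> u k" and v: "\<And>k. k \<in> K \<Longrightarrow> 0 \<le> v k"
    and t: "0 < t" "t < 1"
  shows "(\<Sum>k\<in>K. u k powr t * v k powr (1 - t)) \<le> (\<Sum>k\<in>K. u k) powr t * (\<Sum>k\<in>K. v k) powr (1 - t)"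
proof -
  define S T where "S = (\<Sum>k\<in>K. u k)" and "T = (\<Sum>k\<in>K. v k)"
  have "0 \<le> S" "0 \<le> T"
    unfolding S_def T_def using u v by (auto intro: sum_nonneg)
  show ?thesis
  proof (cases "S = 0 \<or> T = 0")
    case True
    then have "\<forall>k\<in>K. u k = 0 \<or> v k = 0"
      using K u v sum_nonneg_eq_0_iff unfolding S_def T_def by blast
    then show ?thesis
      by (simp add: sum.neutral)
  next
    case False
    with \<open>0 \<le> S\<close> \<open>0 \<le> T\<close> have S: "0 < S" and T: "0 < T"
      by auto
    have "(\<Sum>k\<in>K. u k powr t * v k powr (1 - t)) =
        (\<Sum>k\<in>K. S powr t * T powr (1 - t) * ((u k / S) powr t * (v k / T) powr (1 - t)))"
      using u v S T by (intro sum.cong refl) (simp add: powr_divide)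
    also have "\<dots> \<le> (\<Sum>k\<in>K. S powr t * T powr (1 - t) * (t * (u k / S) + (1 - t) * (v k / T)))"
      using u v S T t by (intro sum_mono mult_left_mono Youngs_inequality_0_nonneg) auto
    also have "\<dots> = S powr t * T powr (1 - t) * ((\<Sum>k\<in>K. t * (u k / S)) + (\<Sum>k\<in>K. (1 - t) * (v k / T)))"
      by (simp only: sum.distrib[symmetric] sum_distrib_left)
    also have "\<dots> = S powr t * T powr (1 - t)"
      unfolding sum_distrib_left[symmetric] sum_divide_distrib[symmetric] S_def[symmetric] T_def[symmetric]
      using S T by simp
    finally show ?thesis
      unfolding S_def T_def .
  qed
qed

lemma sum_supp_powr_log_convex:
  fixes w a b :: "'k \<Rightarrow> real"
  assumes K: "finite K" and w: "\<And>k. k \<in> K \<Longrightarrow> 0 \<le> w k" and t: "0 < t" "t < 1"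
  shows "(\<Sum>k\<in>K. w k * supp_powr (a k) (t*x + (1-t)*y) * supp_powr (b k) (1 - (t*x + (1-t)*y)))
    \<le> (\<Sum>k\<in>K. w k * supp_powr (a k) x * supp_powr (b k) (1 - x)) powr t *
      (\<Sum>k\<in>K. w k * supp_powr (a k) y * supp_powr (b k) (1 - y)) powr (1 - t)"
  using Holder_sum_powr[OF K _ _ t] w by (simp add: supp_powr_interpolate supp_powr_nonneg)

lemma classical_trace_nonneg:
  assumes "doubly_stochastic n w"
  shows "0 \<le> classical_trace n p q w s"
  using assms unfolding doubly_stochastic_def classical_trace_def
  by (simp add: sum_nonneg supp_powr_nonneg)

lemma classical_trace_log_convex:
  assumes "doubly_stochastic n w" and t: "0 < t" "t < 1"
  shows "classical_trace n p q w (t*x + (1-t)*y) \<le>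
    classical_trace n p q w x powr t * classical_trace n p q w y powr (1 - t)"
proof -
  have pairs: "classical_trace n p q w s = (\<Sum>k\<in>{..<n} \<times> {..<n}.
      w (fst k) (snd k) * supp_powr (p (fst k)) s * supp_powr (q (snd k)) (1 - s))" for s
    unfolding classical_trace_def by (simp add: sum.cartesian_product case_prod_beta)
  have "0 \<le> w (fst k) (snd k)" for k
    using assms(1) unfolding doubly_stochastic_def by simp
  then show ?thesis
    unfolding pairs
    by (intro sum_supp_powr_log_convex[where K = "{..<n} \<times> {..<n}", OF _ _ t]) auto
qed

lemma classical_trace_at_0_le_1:
  assumes q: "prob_vector n q" and w: "doubly_stochastic n w"
  shows "classical_trace n p q w 0 \<le> 1"
proof -
  have "w i j * supp_powr (p i) 0 * supp_powr (q j) (1 - 0) \<le> w i j * q j" if "j < n" for i j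
  proof -
    have "0 \<le> w i j" "0 \<le> q j"
      using q w that unfolding prob_vector_def doubly_stochastic_def by auto
    then show ?thesis
      by (simp add: supp_powr_1 mult_right_mono mult_left_le supp_powr_0_le_1)
  qed
  then have "classical_trace n p q w 0 \<le> (\<Sum>i<n. \<Sum>j<n. w i j * q j)"
    unfolding classical_trace_def by (intro sum_mono) auto
  also have "\<dots> = (\<Sum>j<n. q j * (\<Sum>i<n. w i j))"
    by (subst sum.swap) (simp add: sum_distrib_left mult.commute)
  also have "\<dots> = 1"
    using q w unfolding prob_vector_def doubly_stochastic_def by simp
  finally show ?thesis .
qed

lemma classical_trace_at_1_le_1:
  assumes p: "prob_vector n p" and w: "doubly_stochastic n w"
  shows "classical_trace n p q w 1 \<le> 1"
proof -
  have "w i j * supp_powr (p i) 1 * supp_powr (q j) (1 - 1) \<le> w i j * p i" if "i < n" for i j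
  proof -
    have "0 \<le> w i j * p i"
      using p w that unfolding prob_vector_def doubly_stochastic_def by auto
    then show ?thesis
      using p that unfolding prob_vector_def by (simp add: supp_powr_1 mult_left_le supp_powr_0_le_1)
  qed
  then have "classical_trace n p q w 1 \<le> (\<Sum>i<n. \<Sum>j<n. w i j * p i)"
    unfolding classical_trace_def by (intro sum_mono) auto
  also have "\<dots> = (\<Sum>i<n. p i * (\<Sum>j<n. w i j))"
    by (simp add: sum_distrib_left mult.commute)
  also have "\<dots> = 1"
    using p w unfolding prob_vector_def doubly_stochastic_def by simp
  finally show ?thesis .
qed

section \<open>The divergence inequality\<close>

lemma renyi_interpolation_constant_le:
  fixes \<alpha> \<beta> :: real
  assumes a: "0 < \<alpha>" "\<alpha> < 1" and b: "0 < \<beta>" "\<beta> < 1"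
  shows "\<alpha> * (1 - \<beta>) / (\<alpha> - 2 * \<alpha> * \<beta> + \<beta>) / (1 - \<beta>) \<le>
    (if \<alpha> \<le> \<beta> then \<alpha> / \<beta> else (1 - \<alpha>) / (1 - \<beta>)) / (1 - \<alpha>)"
proof -
  have den: "\<alpha> - 2 * \<alpha> * \<beta> + \<beta> = \<alpha> * (1 - \<beta>) + \<beta> * (1 - \<alpha>)"
    by (simp add: algebra_simps)
  have pos: "0 < \<alpha> * (1 - \<beta>)" "0 < \<beta> * (1 - \<alpha>)"
    using a b by simp_all
  have lhs: "\<alpha> * (1 - \<beta>) / (\<alpha> - 2 * \<alpha> * \<beta> + \<beta>) / (1 - \<beta>) = \<alpha> / (\<alpha> * (1 - \<beta>) + \<beta> * (1 - \<alpha>))"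
    unfolding den using b by (simp add: divide_divide_eq_left)
  show ?thesis
  proof (cases "\<alpha> \<le> \<beta>")
    case True
    have "\<alpha> / (\<alpha> * (1 - \<beta>) + \<beta> * (1 - \<alpha>)) \<le> \<alpha> / (\<beta> * (1 - \<alpha>))"
      using pos a by (intro divide_left_mono) auto
    then show ?thesis
      using True a b unfolding lhs by (simp add: field_simps)
  next
    case False
    have denom: "0 < \<alpha> * (1 - \<beta>) + \<beta> * (1 - \<alpha>)" "0 < 1 - \<beta>"
      using pos b by simp_all
    have "\<alpha> * (1 - \<beta>) \<le> \<alpha> * (1 - \<beta>) + \<beta> * (1 - \<alpha>)"
      using pos by simp
    then have "\<alpha> / (\<alpha> * (1 - \<beta>) + \<beta> * (1 - \<alpha>)) \<le> 1 / (1 - \<beta>)"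
      using denom by (simp add: field_simps)
    also have "\<dots> = (1 - \<alpha>) / (1 - \<beta>) / (1 - \<alpha>)"
      using a by simp
    finally show ?thesis
      unfolding lhs if_not_P[OF False] .
  qed
qed

context
  fixes F :: "real \<Rightarrow> real"
  assumes nonneg: "\<And>s. 0 \<le> F s"
    and log_convex: "\<And>t x y. 0 < t \<Longrightarrow> t < 1 \<Longrightarrow> F (t*x + (1-t)*y) \<le> F x powr t * F y powr (1 - t)"
begin

lemma log_convex_le_powr_left:
  assumes F0: "F 0 \<le> 1" and "0 < \<alpha>" "\<alpha> \<le> \<beta>"
  shows "F \<alpha> \<le> F \<beta> powr (\<alpha> / \<beta>)"
proof (cases "\<alpha> = \<beta>")
  case True
  then show ?thesis
    using nonneg assms by simp
next
  case False
  define t where "t = \<alpha> / \<beta>"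
  have t: "0 < t" "t < 1"
    unfolding t_def using assms False by auto
  have "F \<alpha> = F (t * \<beta> + (1 - t) * 0)"
    unfolding t_def using assms by simp
  also have "\<dots> \<le> F \<beta> powr t * F 0 powr (1 - t)"
    by (rule log_convex[OF t])
  also have "\<dots> \<le> F \<beta> powr t"
    using nonneg F0 t by (intro mult_left_le powr_le1) auto
  finally show ?thesis
    unfolding t_def .
qed

lemma log_convex_le_powr_right:
  assumes F1: "F 1 \<le> 1" and "\<beta> \<le> \<alpha>" "\<alpha> < 1"
  shows "F \<alpha> \<le> F \<beta> powr ((1 - \<alpha>) / (1 - \<beta>))"
proof (cases "\<alpha> = \<beta>")
  case True
  then show ?thesis
    using nonneg assms by simp
next
  case False
  define t where "t = (\<alpha> - \<beta>) / (1 - \<beta>)"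
  have t: "0 < t" "t < 1"
    unfolding t_def using assms False by auto
  have "1 - \<beta> \<noteq> 0"
    using assms by simp
  then have "(1 - \<beta>) * t = \<alpha> - \<beta>"
    unfolding t_def by simp
  then have "t * 1 + (1 - t) * \<beta> = \<alpha>"
    by (simp add: algebra_simps)
  then have "F \<alpha> = F (t * 1 + (1 - t) * \<beta>)"
    by simp
  also have "\<dots> \<le> F 1 powr t * F \<beta> powr (1 - t)"
    by (rule log_convex[OF t])
  also have "\<dots> \<le> F \<beta> powr (1 - t)"
    using nonneg F1 t by (intro mult_left_le_one_le powr_le1) auto
  also have "1 - t = (1 - \<alpha>) / (1 - \<beta>)"
    unfolding t_def using \<open>1 - \<beta> \<noteq> 0\<close> by (simp add: field_simps)
  finally show ?thesis .
qed

lemma log_convex_renyi_bound: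
  assumes F0: "F 0 \<le> 1" and F1: "F 1 \<le> 1"
    and a: "0 < \<alpha>" "\<alpha> < 1" and b: "0 < \<beta>" "\<beta> < 1"
  shows "(if F \<alpha> = 0 then \<infinity> else ereal (ln (F \<alpha>) / (\<alpha> - 1))) \<ge>
    ereal (\<alpha> * (1 - \<beta>) / (\<alpha> - 2 * \<alpha> * \<beta> + \<beta>)) * (if F \<beta> = 0 then \<infinity> else ereal (ln (F \<beta>) / (\<beta> - 1)))"
proof (cases "F \<alpha> = 0")
  case True
  then show ?thesis by simp
next
  case False
  then have Fa: "0 < F \<alpha>"
    using nonneg[of \<alpha>] by simp
  define \<theta> where "\<theta> = (if \<alpha> \<le> \<beta> then \<alpha> / \<beta> else (1 - \<alpha>) / (1 - \<beta>))"
  have bound: "F \<alpha> \<le> F \<beta> powr \<theta>"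
    unfolding \<theta>_def using log_convex_le_powr_left[OF F0 a(1)] log_convex_le_powr_right[OF F1 _ a(2)] by auto
  then have Fb: "0 < F \<beta>"
    using Fa nonneg[of \<beta>] by (cases "F \<beta> = 0") auto
  have "F \<beta> \<le> F 1 powr \<beta> * F 0 powr (1 - \<beta>)"
    using log_convex[OF b, of 1 0] by simp
  also have "\<dots> \<le> 1"
    using nonneg F0 F1 b by (intro mult_le_one powr_le1) auto
  finally have L: "0 \<le> - ln (F \<beta>)"
    using Fb by simp
  have "\<theta> * ln (F \<beta>) \<ge> ln (F \<alpha>)"
    using bound Fa Fb by (simp add: ln_powr flip: ln_le_cancel_iff)
  then have M: "\<theta> * - ln (F \<beta>) \<le> - ln (F \<alpha>)"
    by simp
  define c where "c = \<alpha> * (1 - \<beta>) / (\<alpha> - 2 * \<alpha> * \<beta> + \<beta>)"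
  have "c * (- ln (F \<beta>) / (1 - \<beta>)) = c / (1 - \<beta>) * - ln (F \<beta>)"
    by simp
  also have "\<dots> \<le> \<theta> / (1 - \<alpha>) * - ln (F \<beta>)"
    using renyi_interpolation_constant_le[OF a b] L unfolding c_def \<theta>_def by (intro mult_right_mono) auto
  also have "\<dots> \<le> - ln (F \<alpha>) / (1 - \<alpha>)"
    using divide_right_mono[OF M, of "1 - \<alpha>"] a by simp
  finally have "c * (- ln (F \<beta>) / (1 - \<beta>)) \<le> - ln (F \<alpha>) / (1 - \<alpha>)" .
  moreover have "ln (F \<gamma>) / (\<gamma> - 1) = - ln (F \<gamma>) / (1 - \<gamma>)" for \<gamma>
    by (metis minus_diff_eq minus_divide_divide)
  ultimately show ?thesis
    unfolding c_def[symmetric] using Fa Fb by simp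
qed

end

theorem mainTheorem13:
  fixes n :: nat and \<rho> \<sigma> :: "complex mat" and \<alpha> \<beta> :: real
  assumes "density_mat n \<rho>" and "density_mat n \<sigma>"
    and "0 < \<alpha>" and "\<alpha> < 1" and "0 < \<beta>" and "\<beta> < 1"
  shows "petz_renyi n \<alpha> \<rho> \<sigma> \<ge>
           ereal (\<alpha> * (1 - \<beta>) / (\<alpha> - 2 * \<alpha> * \<beta> + \<beta>)) * petz_renyi n \<beta> \<rho> \<sigma>"
proof -
  obtain p q w where p: "prob_vector n p" and q: "prob_vector n q" and w: "doubly_stochastic n w"
    and trace: "petz_trace n \<rho> \<sigma> = classical_trace n p q w"
    by (rule petz_trace_classical[OF assms(1,2)])
  let ?F = "classical_trace n p q w"
  have renyi: "petz_renyi n \<gamma> \<rho> \<sigma> = (if ?F \<gamma> = 0 then \<infinity> else ereal (ln (?F \<gamma>) / (\<gamma> - 1)))" for \<gamma>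
    unfolding petz_renyi_def Let_def trace[symmetric] petz_trace_def ..
  show ?thesis
    unfolding renyi
    by (rule log_convex_renyi_bound)
      (use classical_trace_nonneg[OF w] classical_trace_log_convex[OF w]
        classical_trace_at_0_le_1[OF q w] classical_trace_at_1_le_1[OF p w] assms in auto)
qed

end
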